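(* Let $\mathcal{H}$ be a hedgehog and let $k>2$ be an integer. Then the $k$th Order Preserving Set $\mathcal{P}_k$ of $\mathcal{H}$ is singular, i.e. there exists $s\in[0,2\pi)$ with $\mathcal{P}_k'(s)=0$. Moreover, if $\mathcal{P}_k$ has only finitely many singular points (parameters $s\in[0,2\pi)$ with $\mathcal{P}_k'(s)=0$), then their number is divisible by $k$.
   Context: Write $u(s)=(\cos s,\sin s)$, $u'(s)=(-\sin s,\cos s)$. A hedgehog is a closed planar curve determined by a smooth $2\pi$-periodic function $h$ (its support function) via $\mathcal{H}(s)=h(s)u(s)+h'(s)u'(s)$. Its average width is $\overline{w}=\frac1\pi\int_0^{2\pi}h(s)\,ds$. For $(x,y)\in\mathbb{R}^2$ let $(x,y)^\perp=(-y,x)$. The $k$th Order Preserving Set of $\mathcal{H}$ is the curve $\mathcal{P}_k(s)=\frac{1}{k}\sum_{j=1}^{k}\Big(\cos\big(\tfrac{2\pi j}{k}\big)\,\mathcal{H}\big(s+\tfrac{2\pi j}{k}\big)-\sin\big(\tfrac{2\pi j}{k}\big)\,\mathcal{H}\big(s+\tfrac{2\pi j}{k}\big)^{\perp}\Big)-\frac{1}{2}\overline{w}\,u(s)$, $s\in[0,2\pi]$. *)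

theory Defs
  imports "HOL-Analysis.Analysis"
begin

definition uvec :: "real \<Rightarrow> real \<times> real" where
  "uvec s = (cos s, sin s)"

definition uvec' :: "real \<Rightarrow> real \<times> real" where
  "uvec' s = (- sin s, cos s)"

definition perp :: "real \<times> real \<Rightarrow> real \<times> real" where
  "perp p = (- snd p, fst p)"

definition smooth_fun :: "(real \<Rightarrow> real) \<Rightarrow> bool" where
  "smooth_fun h \<longleftrightarrow> (\<forall>n x. ((deriv ^^ n) h) differentiable (at x))"

definition hedgehog :: "(real \<Rightarrow> real) \<Rightarrow> real \<Rightarrow> real \<times> real" where
  "hedgehog h s = h s *\<^sub>R uvec s + deriv h s *\<^sub>R uvec' s"

definition avg_width :: "(real \<Rightarrow> real) \<Rightarrow> real" where
  "avg_width h = (1 / pi) * integral {0..2*pi} h"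

definition OPS :: "(real \<Rightarrow> real) \<Rightarrow> nat \<Rightarrow> real \<Rightarrow> real \<times> real" where
  "OPS h k s =
     (1 / real k) *\<^sub>R
       (\<Sum>j=1..k. cos (2*pi*real j / real k) *\<^sub>R hedgehog h (s + 2*pi*real j / real k)
                 - sin (2*pi*real j / real k) *\<^sub>R perp (hedgehog h (s + 2*pi*real j / real k)))
     - ((1/2) * avg_width h) *\<^sub>R uvec s"

definition singular_params :: "(real \<Rightarrow> real \<times> real) \<Rightarrow> real set" where
  "singular_params P = {s \<in> {0..<2*pi}. (P has_vector_derivative 0) (at s)}"

end

theory Submission
  imports Defs
begin

(* P_k is itself the hedgehog with support function p = A h - w/2, where A h is the average of
   the k translates h(s + 2 pi j/k) and w the average width. Hence P_k' = (p + p'') u', and the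
   singular points are the zeros of the radius of curvature q = p + p''. Since A h is
   2 pi/k-periodic, so is q, and its zeros in [0, 2 pi) are k translated copies of those in
   [0, 2 pi/k). An antiderivative of q takes equal values at 0 and 2 pi, because A h, like h,
   integrates to pi w over a full period; Rolle's theorem then yields a zero. *)

lemma periodic_iterate:
  fixes f :: "real \<Rightarrow> 'a"
  assumes "\<And>s. f (s + T) = f s"
  shows "f (s + real m * T) = f s"
proof (induction m)
  case (Suc m)
  have "f (s + real (Suc m) * T) = f ((s + real m * T) + T)"
    by (simp add: algebra_simps)
  with Suc assms show ?case by simp
qed simp

lemma card_periodic_set:
  fixes P :: "real \<Rightarrow> bool"
  assumes T: "T > 0" and per: "\<And>s. P (s + T) = P s"
  shows "card {s \<in> {0..<real k * T}. P s} = k * card {s \<in> {0..<T}. P s}"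
proof -
  define A where "A = {s \<in> {0..<T}. P s}"
  define B where "B = {s \<in> {0..<real k * T}. P s}"
  define n where "n x = nat \<lfloor>x / T\<rfloor>" for x
  have n: "real (n x) * T \<le> x" "x < real (n x) * T + T" if "x \<ge> 0" for x
  proof -
    have "real (n x) = of_int \<lfloor>x / T\<rfloor>" using that T by (simp add: n_def)
    then have "real (n x) \<le> x / T" "x / T < real (n x) + 1" by linarith+
    then show "real (n x) * T \<le> x" "x < real (n x) * T + T"
      using T by (simp_all add: field_simps)
  qed
  have n_shift: "n (s + real m * T) = m" if "0 \<le> s" "s < T" for s m
  proof -
    have "\<lfloor>(s + real m * T) / T\<rfloor> = int m"
      using that T by (intro floor_unique) (simp_all add: field_simps)
    then show ?thesis by (simp add: n_def)
  qed
  define f where "f = (\<lambda>(m, s). s + real m * T)"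
  define g where "g x = (n x, x - real (n x) * T)" for x
  have "bij_betw f ({..<k} \<times> A) B"
  proof (rule bij_betw_byWitness[where f' = g])
    show "\<forall>a\<in>{..<k} \<times> A. g (f a) = a"
      by (auto simp: A_def f_def g_def n_shift)
    show "\<forall>x\<in>B. f (g x) = x"
      by (simp add: f_def g_def)
    show "f ` ({..<k} \<times> A) \<subseteq> B"
    proof (rule image_subsetI)
      fix a assume "a \<in> {..<k} \<times> A"
      then obtain m s where a: "a = (m, s)" "m < k" "s \<in> A" by blast
      then have "real m + 1 \<le> real k" "0 \<le> s" "s < T" "P s" by (auto simp: A_def)
      then have "(real m + 1) * T \<le> real k * T"
        using T by (intro mult_right_mono) simp_all
      then have "s + real m * T < real k * T"
        using \<open>s < T\<close> by (simp add: algebra_simps)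
      then show "f a \<in> B"
        using \<open>0 \<le> s\<close> \<open>P s\<close> T periodic_iterate[of P T s m] per by (simp add: B_def f_def a)
    qed
    show "g ` B \<subseteq> {..<k} \<times> A"
    proof (rule image_subsetI)
      fix x assume "x \<in> B"
      then have x: "0 \<le> x" "x < real k * T" "P x" by (auto simp: B_def)
      have "real (n x) * T < real k * T" using n[OF x(1)] x(2) by linarith
      then have "n x < k" using T by simp
      moreover have "P (x - real (n x) * T)"
        using periodic_iterate[of P T "x - real (n x) * T" "n x"] per x(3) by simp
      ultimately show "g x \<in> {..<k} \<times> A"
        using n[OF x(1)] by (simp add: A_def g_def)
    qed
  qed
  then have "card B = k * card A"
    by (metis bij_betw_same_card card_cartesian_product card_lessThan)
  then show ?thesis by (simp add: A_def B_def)
qed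

lemma has_real_derivative_periodic:
  assumes per: "\<And>x. f (x + L) = f x" and f': "\<And>x. (f has_real_derivative f' x) (at x)"
  shows "f' (x + L) = f' x"
proof -
  have "((\<lambda>x. f (x + L)) has_real_derivative f' (x + L)) (at x)"
    using f'[of "x + L"] DERIV_shift by blast
  then have "(f has_real_derivative f' (x + L)) (at x)" using per by simp
  then show ?thesis using f'[of x] DERIV_unique by blast
qed

lemma antiderivative_periodic_increment:
  assumes F: "\<And>x. (F has_real_derivative f x) (at x)" and per: "\<And>x. f (x + L) = f x"
  shows "F (x + L) - F x = F L - F 0"
proof -
  have "((\<lambda>x. F (x + L) - F x) has_real_derivative 0) (at x)" for x
  proof -
    have "((\<lambda>x. F (x + L)) has_real_derivative f (x + L)) (at x)"
      using F[of "x + L"] DERIV_shift by blast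
    then show ?thesis using DERIV_diff[OF _ F[of x]] per by fastforce
  qed
  from DERIV_isconst_all[OF allI[OF this], of x 0] show ?thesis by simp
qed

lemma continuous_has_antiderivative:
  fixes f :: "real \<Rightarrow> real"
  assumes "continuous_on UNIV f"
  shows "\<exists>F. \<forall>x. (F has_real_derivative f x) (at x)"
proof -
  have "\<exists>F. \<forall>x::real. -\<infinity> < x \<longrightarrow> x < \<infinity> \<longrightarrow> (F has_vector_derivative f x) (at x)"
    using assms by (intro einterval_antiderivative) (auto simp: continuous_on_eq_continuous_at)
  then show ?thesis
    by (simp add: has_real_derivative_iff_has_vector_derivative)
qed

lemma smooth_fun_has_real_derivative:
  assumes "smooth_fun h"
  shows "((deriv ^^ n) h has_real_derivative (deriv ^^ Suc n) h x) (at x)"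
  using assms unfolding smooth_fun_def by (simp add: DERIV_deriv_iff_real_differentiable)

lemma has_vector_derivative_uvec: "(uvec has_vector_derivative uvec' s) (at s)"
  unfolding uvec_def[abs_def] uvec'_def
  by (intro has_vector_derivative_Pair)
    (auto intro!: derivative_eq_intros simp flip: has_real_derivative_iff_has_vector_derivative)

lemma has_vector_derivative_uvec': "(uvec' has_vector_derivative - uvec s) (at s)"
  unfolding uvec'_def[abs_def] uvec_def
  by (auto intro!: has_vector_derivative_Pair derivative_eq_intros
      simp flip: has_real_derivative_iff_has_vector_derivative)

lemma uvec'_nonzero: "uvec' s \<noteq> 0"
  by (auto simp: uvec'_def zero_prod_def dest: sin_zero_abs_cos_one)

(* For p1 = p' the curve is the hedgehog with support function p; p + p'' is its radius of
   curvature. *)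
lemma has_vector_derivative_support_curve:
  assumes "(p has_real_derivative p1 s) (at s)" and "(p1 has_real_derivative p2) (at s)"
  shows "((\<lambda>s. p s *\<^sub>R uvec s + p1 s *\<^sub>R uvec' s) has_vector_derivative (p s + p2) *\<^sub>R uvec' s) (at s)"
proof -
  have "((\<lambda>s. p s *\<^sub>R uvec s + p1 s *\<^sub>R uvec' s) has_vector_derivative
      (p s *\<^sub>R uvec' s + p1 s *\<^sub>R uvec s) + (p1 s *\<^sub>R - uvec s + p2 *\<^sub>R uvec' s)) (at s)"
    using assms by (intro derivative_intros has_vector_derivative_scaleR has_vector_derivative_uvec
        has_vector_derivative_uvec')
  then show ?thesis by (simp add: algebra_simps)
qed

lemma hedgehog_rotate:
  "cos t *\<^sub>R hedgehog h (s + t) - sin t *\<^sub>R perp (hedgehog h (s + t))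
     = h (s + t) *\<^sub>R uvec s + deriv h (s + t) *\<^sub>R uvec' s"
proof -
  have cos_s: "cos s = cos (s + t) * cos t + sin (s + t) * sin t"
    and sin_s: "sin s = sin (s + t) * cos t - cos (s + t) * sin t"
    using cos_diff[of "s + t" t] sin_diff[of "s + t" t] by simp_all
  show ?thesis
    unfolding hedgehog_def uvec_def uvec'_def perp_def cos_s sin_s by (simp add: algebra_simps)
qed

definition shift_avg :: "nat \<Rightarrow> (real \<Rightarrow> real) \<Rightarrow> real \<Rightarrow> real" where
  "shift_avg k f s = (1 / real k) * (\<Sum>j=1..k. f (s + 2*pi*real j / real k))"

lemma OPS_eq_support_curve:
  "OPS h k s = (shift_avg k h s - avg_width h / 2) *\<^sub>R uvec s + shift_avg k (deriv h) s *\<^sub>R uvec' s"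
  by (simp add: OPS_def hedgehog_rotate shift_avg_def sum.distrib scaleR_sum_left[symmetric]
      algebra_simps)

lemma shift_avg_has_real_derivative:
  assumes "\<And>x. (f has_real_derivative f' x) (at x)"
  shows "(shift_avg k f has_real_derivative shift_avg k f' s) (at s)"
proof -
  have "((\<lambda>s. f (s + 2*pi*real j / real k)) has_real_derivative f' (s + 2*pi*real j / real k)) (at s)"
    for j
    using assms DERIV_shift by blast
  then show ?thesis
    unfolding shift_avg_def[abs_def] by (intro DERIV_cmult DERIV_sum) auto
qed

lemma shift_avg_increment:
  assumes "\<And>x. f (x + L) = f x + C" and "k > 0"
  shows "shift_avg k f (s + L) = shift_avg k f s + C"
proof -
  have "(\<Sum>j=1..k. f (s + L + 2*pi*real j / real k)) = (\<Sum>j=1..k. f (s + 2*pi*real j / real k)) + real k * C"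
    using assms(1)[of "s + 2*pi*real _ / real k"] by (simp add: sum.distrib add_ac)
  then show ?thesis
    using assms(2) by (simp add: shift_avg_def field_simps)
qed

lemma shift_avg_periodic:
  assumes per: "\<And>x. f (x + 2*pi) = f x" and "k > 0"
  shows "shift_avg k f (s + 2*pi / real k) = shift_avg k f s"
proof -
  define F where "F i = f (s + 2*pi*real i / real k)" for i :: nat
  have shift: "f (s + 2*pi / real k + 2*pi*real j / real k) = F (Suc j)" for j
    using \<open>k > 0\<close> by (simp add: F_def field_simps)
  have "F (Suc k) = F 1"
    using per[of "s + 2*pi / real k"] \<open>k > 0\<close> by (simp add: F_def field_simps)
  then have "(\<Sum>j=1..k. F (Suc j) - F j) = 0"
    by (simp add: sum_Suc_diff)
  then show ?thesis
    by (simp add: shift_avg_def shift sum_subtractf F_def)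
qed

lemma OPS_has_vector_derivative:
  assumes h1: "\<And>x. (h has_real_derivative h1 x) (at x)"
    and h2: "\<And>x. (h1 has_real_derivative h2 x) (at x)"
  shows "(OPS h k has_vector_derivative
    (shift_avg k h s + shift_avg k h2 s - avg_width h / 2) *\<^sub>R uvec' s) (at s)"
proof -
  have "deriv h = h1"
    using h1 DERIV_imp_deriv by blast
  then have OPS: "OPS h k =
      (\<lambda>s. (shift_avg k h s - avg_width h / 2) *\<^sub>R uvec s + shift_avg k h1 s *\<^sub>R uvec' s)"
    by (intro ext) (simp add: OPS_eq_support_curve)
  have "((\<lambda>s. shift_avg k h s - avg_width h / 2) has_real_derivative shift_avg k h1 s) (at s)"
    using DERIV_diff[OF shift_avg_has_real_derivative[OF h1] DERIV_const] by simp
  from has_vector_derivative_support_curve[OF this shift_avg_has_real_derivative[OF h2]]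
  show ?thesis
    unfolding OPS diff_add_eq .
qed

lemma OPS_singular_iff:
  assumes h1: "\<And>x. (h has_real_derivative h1 x) (at x)"
    and h2: "\<And>x. (h1 has_real_derivative h2 x) (at x)"
  shows "(OPS h k has_vector_derivative 0) (at s) \<longleftrightarrow>
    shift_avg k h s + shift_avg k h2 s = avg_width h / 2"
proof -
  note D = OPS_has_vector_derivative[OF h1 h2, of k s]
  have "(OPS h k has_vector_derivative 0) (at s) \<longleftrightarrow>
      (shift_avg k h s + shift_avg k h2 s - avg_width h / 2) *\<^sub>R uvec' s = 0"
    using D vector_derivative_unique_at by metis
  also have "\<dots> \<longleftrightarrow> shift_avg k h s + shift_avg k h2 s = avg_width h / 2"
    using uvec'_nonzero[of s] by simp
  finally show ?thesis .
qed

lemma exists_zero_shift_avg_radius: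
  assumes per: "\<And>x. h (x + 2*pi) = h x"
    and h1: "\<And>x. (h has_real_derivative h1 x) (at x)"
    and h2: "\<And>x. (h1 has_real_derivative h2 x) (at x)"
    and "k > 0"
  shows "\<exists>s\<in>{0<..<2*pi}. shift_avg k h s + shift_avg k h2 s = avg_width h / 2"
proof -
  have "continuous_on UNIV h"
    using h1 by (meson DERIV_continuous continuous_at_imp_continuous_on)
  from continuous_has_antiderivative[OF this]
  obtain H where H: "\<And>x. (H has_real_derivative h x) (at x)"
    by blast
  have "(h has_integral H (2*pi) - H 0) {0..2*pi}"
    using has_field_derivative_at_within[OF H]
    by (intro fundamental_theorem_of_calculus) (simp_all add: has_real_derivative_iff_has_vector_derivative)
  then have "H (2*pi) - H 0 = pi * avg_width h"
    by (simp add: avg_width_def integral_unique)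
  then have "H (x + 2*pi) = H x + pi * avg_width h" for x
    using antiderivative_periodic_increment[of H h "2*pi", OF H per, of x] by simp
  then have H_inc: "shift_avg k H (s + 2*pi) = shift_avg k H s + pi * avg_width h" for s
    using \<open>k > 0\<close> by (rule shift_avg_increment)
  have h1_inc: "shift_avg k h1 (s + 2*pi) = shift_avg k h1 s + 0" for s
    using has_real_derivative_periodic[of h "2*pi" h1, OF per h1] \<open>k > 0\<close>
    by (intro shift_avg_increment) simp_all
  define G where "G s = shift_avg k H s + shift_avg k h1 s - avg_width h / 2 * s" for s
  have G': "(G has_real_derivative shift_avg k h s + shift_avg k h2 s - avg_width h / 2) (at s)" for s
  proof -
    have "(G has_real_derivative shift_avg k h s + shift_avg k h2 s - avg_width h / 2 * 1) (at s)"
      unfolding G_def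
      by (intro DERIV_diff DERIV_add DERIV_cmult DERIV_ident shift_avg_has_real_derivative H h2)
    then show ?thesis by simp
  qed
  have "G 0 = G (2*pi)"
    using H_inc[of 0] h1_inc[of 0] by (simp add: G_def)
  moreover have "continuous_on {0..2*pi} G"
    using G' by (meson DERIV_continuous continuous_at_imp_continuous_on)
  moreover have "G differentiable (at x)" for x
    using G' real_differentiable_def by blast
  ultimately obtain z where "0 < z" "z < 2*pi" "(G has_real_derivative 0) (at z)"
    using Rolle[of 0 "2*pi" G] by auto
  then show ?thesis
    using G'[of z] DERIV_unique by force
qed

theorem proposition3p13:
  fixes h :: "real \<Rightarrow> real" and k :: nat
  assumes "smooth_fun h"
    and "\<And>s. h (s + 2*pi) = h s"
    and "k > 2"
  shows "(\<exists>s\<in>{0..<2*pi}. (OPS h k has_vector_derivative 0) (at s))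
    \<and> (finite (singular_params (OPS h k)) \<longrightarrow> k dvd card (singular_params (OPS h k)))"
proof -
  define h1 h2 where "h1 = deriv h" and "h2 = deriv (deriv h)"
  have h1: "(h has_real_derivative h1 x) (at x)" for x
    using smooth_fun_has_real_derivative[OF assms(1), of 0] by (simp add: h1_def)
  have h2: "(h1 has_real_derivative h2 x) (at x)" for x
    using smooth_fun_has_real_derivative[OF assms(1), of 1] by (simp add: h1_def h2_def)
  have per2: "h2 (x + 2*pi) = h2 x" for x
    by (intro has_real_derivative_periodic[OF has_real_derivative_periodic[OF assms(2) h1] h2])
  have "k > 0" using assms(3) by simp
  define P where "P s \<longleftrightarrow> shift_avg k h s + shift_avg k h2 s = avg_width h / 2" for s
  have singular: "singular_params (OPS h k) = {s \<in> {0..<real k * (2*pi / real k)}. P s}"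
    using \<open>k > 0\<close> by (simp add: singular_params_def P_def OPS_singular_iff[OF h1 h2])
  have "P (s + 2*pi / real k) = P s" for s
    using shift_avg_periodic[of h, OF assms(2) \<open>k > 0\<close>] shift_avg_periodic[of h2, OF per2 \<open>k > 0\<close>]
    by (simp add: P_def)
  then have "card (singular_params (OPS h k)) = k * card {s \<in> {0..<2*pi / real k}. P s}"
    unfolding singular using \<open>k > 0\<close> by (intro card_periodic_set) simp_all
  moreover have "\<exists>s\<in>{0..<2*pi}. (OPS h k has_vector_derivative 0) (at s)"
    using exists_zero_shift_avg_radius[OF assms(2) h1 h2 \<open>k > 0\<close>]
    by (auto simp: OPS_singular_iff[OF h1 h2])
  ultimately show ?thesis by simp
qed

end
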